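(* Let $\mathbb{F}\in\{\mathbb{R},\mathbb{C}\}$, $N\ge 2$, and let $\mathcal{E}(M,N)=\{\{\varphi_i\}_{i=1}^M\subseteq\mathbb{F}^N:\|\varphi_i\|=\sqrt{N/M}\text{ for all }i\}$. Suppose an equiangular Parseval frame for $\mathbb{F}^N$ with $M$ vectors exists. Then $\Phi\in\mathcal{E}(M,N)$ maximizes $NE_2$ over $\mathcal{E}(M,N)$ if and only if $\Phi$ is an equiangular Parseval frame.
   Context: $\Phi$ also denotes the $N\times M$ matrix with columns $\varphi_i$. A Parseval frame satisfies $\Phi\Phi^*=I$; it is equiangular if all $\|\varphi_i\|$ are equal and all $|\langle\varphi_i,\varphi_j\rangle|$, $i\ne j$, are equal. For $K\subseteq[M]$, $\Phi_K$ is the submatrix of columns indexed by $K$. The nuclear norm $\|F\|_*$ is the sum of the singular values of $F$, and $NE_k(\Phi)=\sum_{|K|=k}\|\Phi_K\|_*$. *)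

theory Defs
  imports Complex_Main "Jordan_Normal_Form.Schur_Decomposition" "Jordan_Normal_Form.Char_Poly"
begin

text \<open>A family of M vectors in F^N (F = R or C, embedded in C) is an N x M complex
  matrix Phi whose columns are the vectors; columns are indexed 0..M-1.\<close>

definition col_norm :: "complex mat \<Rightarrow> nat \<Rightarrow> real" where
  "col_norm Phi j = sqrt (\<Sum>r<dim_row Phi. (cmod (Phi $$ (r, j)))\<^sup>2)"

definition col_inner :: "complex mat \<Rightarrow> nat \<Rightarrow> nat \<Rightarrow> complex" where
  "col_inner Phi i j = (\<Sum>r<dim_row Phi. Phi $$ (r, i) * cnj (Phi $$ (r, j)))"

definition parseval :: "complex mat \<Rightarrow> bool" where
  "parseval Phi \<longleftrightarrow> Phi * mat_adjoint Phi = 1\<^sub>m (dim_row Phi)"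

definition equiangular :: "complex mat \<Rightarrow> bool" where
  "equiangular Phi \<longleftrightarrow>
     (\<forall>i<dim_col Phi. \<forall>j<dim_col Phi. col_norm Phi i = col_norm Phi j) \<and>
     (\<forall>i<dim_col Phi. \<forall>j<dim_col Phi. \<forall>k<dim_col Phi. \<forall>l<dim_col Phi.
        i \<noteq> j \<longrightarrow> k \<noteq> l \<longrightarrow> cmod (col_inner Phi i j) = cmod (col_inner Phi k l))"

text \<open>Nuclear norm: sum of the singular values, i.e. of the square roots of the eigenvalues
  (counted with algebraic multiplicity) of A^* A.\<close>
definition nuclear_norm :: "complex mat \<Rightarrow> real" where
  "nuclear_norm A =
     (let p = char_poly (mat_adjoint A * A)
      in \<Sum>z\<in>{z. poly p z = 0}. real (order z p) * sqrt (Re z))"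

definition col_submat :: "complex mat \<Rightarrow> nat set \<Rightarrow> complex mat" where
  "col_submat Phi K = mat (dim_row Phi) (card K) (\<lambda>(r, j). Phi $$ (r, enumerate K j))"

definition NE :: "nat \<Rightarrow> complex mat \<Rightarrow> real" where
  "NE k Phi = (\<Sum>K\<in>{K. K \<subseteq> {..<dim_col Phi} \<and> card K = k}. nuclear_norm (col_submat Phi K))"

definition frames_in :: "complex set \<Rightarrow> nat \<Rightarrow> nat \<Rightarrow> complex mat set" where
  "frames_in F M N = {Phi. Phi \<in> carrier_mat N M \<and> (\<forall>r<N. \<forall>j<M. Phi $$ (r, j) \<in> F)}"

definition E_set :: "complex set \<Rightarrow> nat \<Rightarrow> nat \<Rightarrow> complex mat set" where
  "E_set F M N = {Phi \<in> frames_in F M N. \<forall>j<M. col_norm Phi j = sqrt (real N / real M)}"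

end

theory Submission
  imports Defs "HOL-Analysis.Convex"
begin

(*
  For two columns of squared norm a = N/M whose inner product has squared modulus t, the Gram
  matrix has eigenvalues a + sqrt t and a - sqrt t, so the nuclear norm of the pair is
  sqrt (2a + 2 sqrt (a^2 - t)), a strictly concave function of t. The frame potential
  sum_{i,j} |<phi_i, phi_j>|^2 equals the squared Frobenius norm of Phi Phi^*, hence is at least N,
  with equality exactly for Parseval frames; so the squared overlaps over the M(M-1)/2 pairs add up
  to at least M(M-1)/2 times the Welch bound N(M-N)/(M^2(M-1)). The tangent line of the concave
  function at the Welch bound then bounds NE_2 by M(M-1)/2 times its value there, with equality
  iff every squared overlap equals the Welch bound, i.e. iff Phi is an equiangular Parseval frame.
  An equiangular Parseval frame, which exists by hypothesis, attains the bound.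
*)

lemma enumerate_doubleton:
  assumes "i < (j::nat)"
  shows "enumerate {i, j} 0 = i" and "enumerate {i, j} (Suc 0) = j"
proof -
  have least: "(LEAST n. n \<in> {i, j}) = i"
    using assms by (intro Least_equality) auto
  then show "enumerate {i, j} 0 = i"
    by (simp add: enumerate_0)
  have "{i, j} - {i} = {j}"
    using assms by auto
  moreover have "(LEAST n. n = j) = j"
    by (rule Least_equality) auto
  ultimately show "enumerate {i, j} (Suc 0) = j"
    using least by (simp add: enumerate_Suc enumerate_0)
qed

lemma det_2x2:
  fixes A :: "'a :: comm_ring_1 mat"
  assumes "A \<in> carrier_mat 2 2"
  shows "det A = A $$ (0,0) * A $$ (1,1) - A $$ (0,1) * A $$ (1,0)"
proof -
  have "det A = (\<Sum>i<2. A $$ (i,0) * cofactor A i 0)"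
    by (rule laplace_expansion_column[OF assms]) simp
  also have "\<dots> = A $$ (0,0) * cofactor A 0 0 + A $$ (1,0) * cofactor A 1 0"
    by (simp add: numeral_2_eq_2)
  also have "cofactor A 0 0 = A $$ (1,1)"
    unfolding cofactor_def using assms
    by (subst det_single) (auto simp: mat_delete_def insert_index_def)
  also have "cofactor A 1 0 = - A $$ (0,1)"
    unfolding cofactor_def using assms
    by (subst det_single) (auto simp: mat_delete_def insert_index_def)
  finally show ?thesis
    by (simp add: algebra_simps)
qed

lemma char_poly_2x2:
  fixes A :: "'a :: comm_ring_1 mat"
  assumes "A \<in> carrier_mat 2 2"
  shows "char_poly A = [:- A $$ (0,0), 1:] * [:- A $$ (1,1), 1:] - [:A $$ (0,1) * A $$ (1,0):]"
proof -
  have "char_poly_matrix A $$ (i,j) = (if i = j then [:- A $$ (i,j), 1:] else [:- A $$ (i,j):])"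
    if "i < 2" "j < 2" for i j
    using assms that unfolding char_poly_matrix_def by (auto simp: one_pCons)
  then show ?thesis
    using assms unfolding char_poly_def by (simp add: det_2x2)
qed

lemma order_linear_factor: "order z [:- x, 1:] = (if z = x then 1 else 0)"
  for x z :: "'a :: idom"
  using order_power_n_n[of x 1] by (auto simp: order_0I)

lemma sum_roots_quadratic:
  fixes x y :: complex
  defines "p \<equiv> [:- x, 1:] * [:- y, 1:]"
  shows "(\<Sum>z\<in>{z. poly p z = 0}. real (order z p) * g z) = g x + g y"
proof -
  have nonzero: "[:- x, 1:] * [:- y, 1:] \<noteq> 0"
    by (simp add: no_zero_divisors)
  have order: "order z p = (if z = x then 1 else 0) + (if z = y then 1 else 0)" for z
    unfolding p_def order_mult[OF nonzero] order_linear_factor by simp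
  have "poly p z = (z - x) * (z - y)" for z
    unfolding p_def by (simp add: algebra_simps)
  then have "{z. poly p z = 0} = {x, y}"
    by auto
  then show ?thesis
    unfolding order by (cases "x = y") (auto simp: algebra_simps)
qed

lemma nuclear_norm_eq_if_char_poly:
  assumes "char_poly (mat_adjoint A * A) = [:- x, 1:] * [:- y, 1:]"
  shows "nuclear_norm A = sqrt (Re x) + sqrt (Re y)"
  unfolding nuclear_norm_def Let_def assms by (rule sum_roots_quadratic)

lemma dim_mat_adjoint [simp]:
  "dim_row (mat_adjoint A) = dim_col A" "dim_col (mat_adjoint A) = dim_row A"
  unfolding mat_adjoint_def by auto

lemma index_mat_adjoint:
  "k < dim_col A \<Longrightarrow> r < dim_row A \<Longrightarrow> mat_adjoint A $$ (k, r) = conjugate (A $$ (r, k))"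
  unfolding mat_adjoint_def by (subst mat_of_rows_index) auto

lemma col_norm_sq: "(col_norm Psi i)\<^sup>2 = (\<Sum>r<dim_row Psi. (cmod (Psi $$ (r, i)))\<^sup>2)"
  unfolding col_norm_def by (simp add: sum_nonneg)

lemma col_inner_commute: "col_inner Psi j i = cnj (col_inner Psi i j)"
  unfolding col_inner_def by (simp add: mult.commute)

lemma col_inner_self: "col_inner Psi i i = complex_of_real ((col_norm Psi i)\<^sup>2)"
  unfolding col_inner_def col_norm_sq of_real_sum
  by (intro sum.cong refl) (metis complex_norm_square)

lemma norm_col_inner_le: "cmod (col_inner Psi i j) \<le> col_norm Psi i * col_norm Psi j"
proof -
  let ?n = "dim_row Psi"
  let ?x = "\<lambda>r. cmod (Psi $$ (r, i))" and ?y = "\<lambda>r. cmod (Psi $$ (r, j))"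
  have "cmod (col_inner Psi i j) \<le> (\<Sum>r<?n. ?x r * ?y r)"
    unfolding col_inner_def by (rule order_trans[OF norm_sum]) (simp add: norm_mult)
  also have "\<dots> \<le> sqrt ((\<Sum>r<?n. (?x r)\<^sup>2) * (\<Sum>r<?n. (?y r)\<^sup>2))"
    by (rule real_le_rsqrt) (rule Cauchy_Schwarz_ineq_sum)
  also have "\<dots> = col_norm Psi i * col_norm Psi j"
    unfolding col_norm_def by (simp add: real_sqrt_mult)
  finally show ?thesis .
qed

lemma gram_col_submat:
  "mat_adjoint (col_submat Psi K) * col_submat Psi K =
     mat (card K) (card K) (\<lambda>(k, l). col_inner Psi (enumerate K l) (enumerate K k))"
  by (rule eq_matI)
     (auto simp: col_submat_def col_inner_def index_mat_adjoint scalar_prod_def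
       atLeast0LessThan mult.commute intro!: sum.cong)

lemma nuclear_norm_col_pair:
  assumes "i < j" and "(col_norm Psi i)\<^sup>2 = a" and "(col_norm Psi j)\<^sup>2 = a"
  defines "u \<equiv> cmod (col_inner Psi i j)"
  shows "nuclear_norm (col_submat Psi {i, j}) = sqrt (a + u) + sqrt (a - u)"
proof -
  let ?c = "col_inner Psi i j"
  have "card {i, j} = 2"
    using assms(1) by simp
  then have "mat_adjoint (col_submat Psi {i, j}) * col_submat Psi {i, j} =
      mat 2 2 (\<lambda>(k, l). col_inner Psi (enumerate {i, j} l) (enumerate {i, j} k))"
    by (simp add: gram_col_submat)
  moreover have "cnj ?c * ?c = complex_of_real (u\<^sup>2)"
    unfolding u_def by (metis complex_norm_square mult.commute)
  ultimately have "char_poly (mat_adjoint (col_submat Psi {i, j}) * col_submat Psi {i, j}) =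
      [:- complex_of_real (a + u), 1:] * [:- complex_of_real (a - u), 1:]"
    using assms(2,3)
    by (simp add: char_poly_2x2 enumerate_doubleton[OF assms(1)] col_inner_self
        col_inner_commute[of Psi j i] algebra_simps power2_eq_square)
  from nuclear_norm_eq_if_char_poly[OF this] show ?thesis
    by simp
qed

definition pair_nuclear_norm :: "real \<Rightarrow> real \<Rightarrow> real" where
  "pair_nuclear_norm a t = sqrt (2 * a + 2 * sqrt (a\<^sup>2 - t))"

lemma sum_sqrt_eq_pair_nuclear_norm:
  assumes "0 \<le> u" and "u \<le> a"
  shows "sqrt (a + u) + sqrt (a - u) = pair_nuclear_norm a (u\<^sup>2)"
proof -
  have "0 \<le> sqrt (a + u) + sqrt (a - u)"
    using assms by simp
  moreover have "(sqrt (a + u) + sqrt (a - u))\<^sup>2 = 2 * a + 2 * sqrt (a\<^sup>2 - u\<^sup>2)"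
    using assms by (simp add: power2_eq_square algebra_simps real_sqrt_mult[symmetric])
  ultimately show ?thesis
    unfolding pair_nuclear_norm_def by (metis real_sqrt_unique)
qed

lemma sqrt_le_tangent:
  fixes x x0 :: real
  assumes "0 < x0" and "0 \<le> x"
  shows "sqrt x \<le> sqrt x0 + (x - x0) / (2 * sqrt x0)"
    and "sqrt x = sqrt x0 + (x - x0) / (2 * sqrt x0) \<longleftrightarrow> x = x0"
proof -
  have gap: "sqrt x0 + (x - x0) / (2 * sqrt x0) - sqrt x = (sqrt x - sqrt x0)\<^sup>2 / (2 * sqrt x0)"
    using assms by (simp add: field_simps power2_eq_square)
  have "0 < 2 * sqrt x0"
    using assms by simp
  then have "0 \<le> (sqrt x - sqrt x0)\<^sup>2 / (2 * sqrt x0)"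
    and "(sqrt x - sqrt x0)\<^sup>2 / (2 * sqrt x0) = 0 \<longleftrightarrow> x = x0"
    using assms by auto
  with gap show "sqrt x \<le> sqrt x0 + (x - x0) / (2 * sqrt x0)"
    and "sqrt x = sqrt x0 + (x - x0) / (2 * sqrt x0) \<longleftrightarrow> x = x0"
    by linarith+
qed

lemma pair_nuclear_norm_le_tangent:
  fixes a t t0 :: real
  assumes "0 < a" and "t0 < a\<^sup>2" and "t \<le> a\<^sup>2"
  defines "slope \<equiv> 1 / (2 * sqrt (a\<^sup>2 - t0) * pair_nuclear_norm a t0)"
  shows "pair_nuclear_norm a t \<le> pair_nuclear_norm a t0 - slope * (t - t0)"
    and "pair_nuclear_norm a t = pair_nuclear_norm a t0 - slope * (t - t0) \<longleftrightarrow> t = t0"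
proof -
  define s s0 where "s = sqrt (a\<^sup>2 - t)" and "s0 = sqrt (a\<^sup>2 - t0)"
  define S where "S = pair_nuclear_norm a t0"
  have "0 < s0" "0 \<le> s"
    unfolding s_def s0_def using assms(2,3) by auto
  then have "0 < 2 * a + 2 * s0" "0 \<le> 2 * a + 2 * s"
    using assms(1) by auto
  have S: "S = sqrt (2 * a + 2 * s0)" "0 < S"
    unfolding S_def pair_nuclear_norm_def s0_def using \<open>0 < 2 * a + 2 * s0\<close> by (auto simp: s0_def)
  have inner_le: "s - s0 \<le> - (t - t0) / (2 * s0)"
    using sqrt_le_tangent(1)[of "a\<^sup>2 - t0" "a\<^sup>2 - t"] assms(2,3)
    unfolding s_def s0_def by (simp add: diff_divide_distrib)
  note outer = sqrt_le_tangent[OF \<open>0 < 2 * a + 2 * s0\<close> \<open>0 \<le> 2 * a + 2 * s\<close>, folded S(1)]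
  have outer_le: "pair_nuclear_norm a t \<le> S + (s - s0) / S"
  proof -
    have "((2 * a + 2 * s) - (2 * a + 2 * s0)) / (2 * S) = (s - s0) / S"
      using S(2) by (simp add: field_simps)
    then show ?thesis
      using outer(1) unfolding pair_nuclear_norm_def s_def by simp
  qed
  have "S + (s - s0) / S \<le> S + (- (t - t0) / (2 * s0)) / S"
    using divide_right_mono[OF inner_le, of S] S(2) by simp
  also have "\<dots> = S - slope * (t - t0)"
    unfolding slope_def S_def[symmetric] s0_def[symmetric] by (simp add: minus_divide_left)
  finally have tangent_le: "S + (s - s0) / S \<le> S - slope * (t - t0)" .
  with outer_le show "pair_nuclear_norm a t \<le> pair_nuclear_norm a t0 - slope * (t - t0)"
    unfolding S_def by linarith
  show "pair_nuclear_norm a t = pair_nuclear_norm a t0 - slope * (t - t0) \<longleftrightarrow> t = t0"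
  proof
    assume "pair_nuclear_norm a t = pair_nuclear_norm a t0 - slope * (t - t0)"
    with outer_le tangent_le have "pair_nuclear_norm a t = S + (s - s0) / S"
      unfolding S_def by linarith
    then have "s = s0"
      using outer(2) S(2) unfolding pair_nuclear_norm_def s_def by (simp add: field_simps)
    then show "t = t0"
      using assms(2,3) unfolding s_def s0_def by simp
  qed simp
qed

lemma sum_pair_nuclear_norm_le:
  fixes T :: "'i \<Rightarrow> real"
  assumes "finite I" and "0 < a" and "t0 < a\<^sup>2" and "\<And>p. p \<in> I \<Longrightarrow> T p \<le> a\<^sup>2"
    and "real (card I) * t0 \<le> sum T I"
  shows "(\<Sum>p\<in>I. pair_nuclear_norm a (T p)) \<le> real (card I) * pair_nuclear_norm a t0"
    and "(\<Sum>p\<in>I. pair_nuclear_norm a (T p)) = real (card I) * pair_nuclear_norm a t0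
           \<longleftrightarrow> (\<forall>p\<in>I. T p = t0)"
proof -
  define slope where "slope = 1 / (2 * sqrt (a\<^sup>2 - t0) * pair_nuclear_norm a t0)"
  define gap where "gap p = pair_nuclear_norm a t0 - slope * (T p - t0) - pair_nuclear_norm a (T p)" for p
  note tangent = pair_nuclear_norm_le_tangent[OF assms(2,3) assms(4), folded slope_def]
  have "0 < pair_nuclear_norm a t0"
    unfolding pair_nuclear_norm_def using assms(2,3) by (simp add: add_pos_nonneg)
  then have "0 < slope"
    unfolding slope_def using assms(3) by simp
  then have excess: "0 \<le> slope * (sum T I - real (card I) * t0)"
    using assms(5) by simp
  have gap_nonneg: "0 \<le> gap p" if "p \<in> I" for p
    unfolding gap_def using tangent(1)[OF that] by simp
  have "sum gap I = real (card I) * pair_nuclear_norm a t0 - slope * (sum T I - real (card I) * t0)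
      - (\<Sum>p\<in>I. pair_nuclear_norm a (T p))"
    unfolding gap_def by (simp add: sum_subtractf sum_distrib_left algebra_simps)
  moreover have "0 \<le> sum gap I"
    using gap_nonneg by (rule sum_nonneg)
  ultimately show "(\<Sum>p\<in>I. pair_nuclear_norm a (T p)) \<le> real (card I) * pair_nuclear_norm a t0"
    using excess by linarith
  show "(\<Sum>p\<in>I. pair_nuclear_norm a (T p)) = real (card I) * pair_nuclear_norm a t0
      \<longleftrightarrow> (\<forall>p\<in>I. T p = t0)"
  proof
    assume "(\<Sum>p\<in>I. pair_nuclear_norm a (T p)) = real (card I) * pair_nuclear_norm a t0"
    with \<open>sum gap I = _\<close> excess \<open>0 \<le> sum gap I\<close> have "sum gap I = 0"
      by linarith
    then have "\<forall>p\<in>I. gap p = 0"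
      using sum_nonneg_eq_0_iff[OF assms(1)] gap_nonneg by blast
    then show "\<forall>p\<in>I. T p = t0"
      unfolding gap_def using tangent(2) by auto
  qed simp
qed

definition index_pairs :: "nat \<Rightarrow> (nat \<times> nat) set" where
  "index_pairs M = {(i, j). i < j \<and> j < M}"

lemma finite_index_pairs: "finite (index_pairs M)"
  by (rule finite_subset[of _ "{..<M} \<times> {..<M}"]) (auto simp: index_pairs_def)

lemma index_pairs_Suc: "index_pairs (Suc M) = index_pairs M \<union> (\<lambda>i. (i, M)) ` {..<M}"
  by (auto simp: index_pairs_def less_Suc_eq)

lemma sum_square_index_pairs:
  fixes f :: "nat \<Rightarrow> nat \<Rightarrow> 'a :: comm_semiring_1"
  assumes "\<And>i j. f i j = f j i"
  shows "(\<Sum>i<M. \<Sum>j<M. f i j) = (\<Sum>i<M. f i i) + 2 * (\<Sum>(i, j)\<in>index_pairs M. f i j)"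
proof (induction M)
  case 0
  then show ?case by (simp add: index_pairs_def)
next
  case (Suc M)
  have "index_pairs M \<inter> (\<lambda>i. (i, M)) ` {..<M} = {}"
    by (auto simp: index_pairs_def)
  then have "(\<Sum>(i, j)\<in>index_pairs (Suc M). f i j) = (\<Sum>(i, j)\<in>index_pairs M. f i j) + (\<Sum>i<M. f i M)"
    unfolding index_pairs_Suc using finite_index_pairs
    by (subst sum.union_disjoint) (auto simp: sum.reindex inj_on_def)
  moreover have "(\<Sum>i<Suc M. \<Sum>j<Suc M. f i j) = (\<Sum>i<M. \<Sum>j<M. f i j) + 2 * (\<Sum>i<M. f i M) + f M M"
    using assms by (simp add: sum.distrib mult_2 algebra_simps)
  ultimately show ?case
    using Suc.IH by (simp add: algebra_simps)
qed

lemma card_index_pairs: "2 * real (card (index_pairs M)) = real M * (real M - 1)"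
  using sum_square_index_pairs[of "\<lambda>_ _. 1 :: real" M] by (simp add: algebra_simps)

lemma bij_betw_index_pairs:
  "bij_betw (\<lambda>(i, j). {i, j}) (index_pairs M) {K. K \<subseteq> {..<M} \<and> card K = 2}"
proof (rule bij_betwI')
  fix K assume "K \<in> {K. K \<subseteq> {..<M} \<and> card K = 2}"
  then obtain i j where K: "K = {i, j}" "i < j" "j < M"
    by (auto simp: card_2_iff) (metis insert_commute linorder_neqE_nat)
  then show "\<exists>p\<in>index_pairs M. K = (\<lambda>(i, j). {i, j}) p"
    by (auto simp: index_pairs_def)
qed (auto simp: index_pairs_def doubleton_eq_iff)

lemma NE2_eq_sum_index_pairs:
  "NE 2 Psi = (\<Sum>(i, j)\<in>index_pairs (dim_col Psi). nuclear_norm (col_submat Psi {i, j}))"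
  unfolding NE_def sum.reindex_bij_betw[OF bij_betw_index_pairs, symmetric]
  by (simp add: case_prod_beta)

definition frame_potential :: "complex mat \<Rightarrow> real" where
  "frame_potential Psi = (\<Sum>i<dim_col Psi. \<Sum>j<dim_col Psi. (cmod (col_inner Psi i j))\<^sup>2)"

lemma index_frame_operator:
  assumes "Psi \<in> carrier_mat N M" and "r < N" and "s < N"
  shows "(Psi * mat_adjoint Psi) $$ (r, s) = (\<Sum>i<M. Psi $$ (r, i) * cnj (Psi $$ (s, i)))"
  using assms by (auto simp: scalar_prod_def index_mat_adjoint atLeast0LessThan intro!: sum.cong)

lemma trace_frame_operator:
  assumes "Psi \<in> carrier_mat N M"
  shows "(\<Sum>r<N. Re ((Psi * mat_adjoint Psi) $$ (r, r))) = (\<Sum>i<M. (col_norm Psi i)\<^sup>2)"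
proof -
  have "Re ((Psi * mat_adjoint Psi) $$ (r, r)) = (\<Sum>i<M. (cmod (Psi $$ (r, i)))\<^sup>2)" if "r < N" for r
  proof -
    have "(Psi * mat_adjoint Psi) $$ (r, r) = complex_of_real (\<Sum>i<M. (cmod (Psi $$ (r, i)))\<^sup>2)"
      unfolding index_frame_operator[OF assms that that] of_real_sum
      by (intro sum.cong refl) (metis complex_norm_square)
    then show ?thesis
      by simp
  qed
  then have "(\<Sum>r<N. Re ((Psi * mat_adjoint Psi) $$ (r, r))) = (\<Sum>r<N. \<Sum>i<M. (cmod (Psi $$ (r, i)))\<^sup>2)"
    by simp
  also have "\<dots> = (\<Sum>i<M. \<Sum>r<N. (cmod (Psi $$ (r, i)))\<^sup>2)"
    by (rule sum.swap)
  also have "\<dots> = (\<Sum>i<M. (col_norm Psi i)\<^sup>2)"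
    unfolding col_norm_sq using assms by simp
  finally show ?thesis .
qed

lemma sum_swap_double:
  "(\<Sum>i\<in>A. \<Sum>j\<in>A. \<Sum>r\<in>B. \<Sum>s\<in>B. f i j r s) = (\<Sum>r\<in>B. \<Sum>s\<in>B. \<Sum>i\<in>A. \<Sum>j\<in>A. f i j r s)"
proof -
  have "(\<Sum>i\<in>A. \<Sum>j\<in>A. \<Sum>r\<in>B. \<Sum>s\<in>B. f i j r s) = (\<Sum>i\<in>A. \<Sum>r\<in>B. \<Sum>j\<in>A. \<Sum>s\<in>B. f i j r s)"
    by (intro sum.cong refl) (rule sum.swap)
  also have "\<dots> = (\<Sum>r\<in>B. \<Sum>i\<in>A. \<Sum>j\<in>A. \<Sum>s\<in>B. f i j r s)"
    by (rule sum.swap)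
  also have "\<dots> = (\<Sum>r\<in>B. \<Sum>s\<in>B. \<Sum>i\<in>A. \<Sum>j\<in>A. f i j r s)"
    by (intro sum.cong refl) (simp only: sum.swap[of _ B])
  finally show ?thesis .
qed

lemma frame_potential_eq_frobenius:
  assumes "Psi \<in> carrier_mat N M"
  shows "frame_potential Psi = (\<Sum>r<N. \<Sum>s<N. (cmod ((Psi * mat_adjoint Psi) $$ (r, s)))\<^sup>2)"
proof -
  let ?S = "Psi * mat_adjoint Psi"
  let ?f = "\<lambda>i j s r. Psi $$ (r, i) * cnj (Psi $$ (r, j)) * (cnj (Psi $$ (s, i)) * Psi $$ (s, j))"
  have norm_sq: "complex_of_real ((cmod z)\<^sup>2) = z * cnj z" for z
    by (metis complex_norm_square)
  have "complex_of_real (frame_potential Psi) = (\<Sum>i<M. \<Sum>j<M. \<Sum>s<N. \<Sum>r<N. ?f i j s r)"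
    unfolding frame_potential_def of_real_sum norm_sq col_inner_def using assms
    by (simp add: sum_distrib_left sum_distrib_right)
  also have "\<dots> = (\<Sum>s<N. \<Sum>r<N. \<Sum>i<M. \<Sum>j<M. ?f i j s r)"
    by (rule sum_swap_double)
  also have "\<dots> = (\<Sum>s<N. \<Sum>r<N. ?S $$ (r, s) * cnj (?S $$ (r, s)))"
    by (intro sum.cong refl)
       (simp add: index_frame_operator[OF assms] sum_distrib_left sum_distrib_right algebra_simps)
  also have "\<dots> = (\<Sum>r<N. \<Sum>s<N. ?S $$ (r, s) * cnj (?S $$ (r, s)))"
    by (rule sum.swap)
  also have "\<dots> = complex_of_real (\<Sum>r<N. \<Sum>s<N. (cmod (?S $$ (r, s)))\<^sup>2)"
    unfolding of_real_sum norm_sq ..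
  finally show ?thesis
    by (simp only: of_real_eq_iff)
qed

lemma frame_potential_minus_dim:
  assumes "Psi \<in> carrier_mat N M" and "(\<Sum>i<M. (col_norm Psi i)\<^sup>2) = real N"
  shows "frame_potential Psi - real N =
    (\<Sum>r<N. \<Sum>s<N. (cmod ((Psi * mat_adjoint Psi) $$ (r, s) - (if r = s then 1 else 0)))\<^sup>2)"
proof -
  let ?S = "Psi * mat_adjoint Psi"
  have delta: "(cmod (z - (if b then 1 else 0)))\<^sup>2 = (cmod z)\<^sup>2 - (if b then 2 * Re z - 1 else 0)"
    for z b by (cases b) (simp_all add: cmod_power2 power2_diff algebra_simps)
  have "(\<Sum>r<N. \<Sum>s<N. (cmod (?S $$ (r, s) - (if r = s then 1 else 0)))\<^sup>2)
      = (\<Sum>r<N. \<Sum>s<N. (cmod (?S $$ (r, s)))\<^sup>2)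
        - (\<Sum>r<N. \<Sum>s<N. (if r = s then 2 * Re (?S $$ (r, s)) - 1 else 0))"
    unfolding delta by (simp add: sum_subtractf)
  also have "(\<Sum>r<N. \<Sum>s<N. (if r = s then 2 * Re (?S $$ (r, s)) - 1 else 0))
      = (\<Sum>r<N. 2 * Re (?S $$ (r, r)) - 1)"
    by (intro sum.cong refl) (simp add: sum.delta)
  also have "(\<Sum>r<N. 2 * Re (?S $$ (r, r)) - 1) = real N"
    using assms(2) trace_frame_operator[OF assms(1)]
    by (simp add: sum_subtractf sum_distrib_left[symmetric] del: index_mult_mat)
  also have "(\<Sum>r<N. \<Sum>s<N. (cmod (?S $$ (r, s)))\<^sup>2) = frame_potential Psi"
    using frame_potential_eq_frobenius[OF assms(1)] ..
  finally show ?thesis ..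
qed

lemma frame_potential_ge_dim:
  assumes "Psi \<in> carrier_mat N M" and "(\<Sum>i<M. (col_norm Psi i)\<^sup>2) = real N"
  shows "real N \<le> frame_potential Psi"
proof -
  have "0 \<le> (\<Sum>r<N. \<Sum>s<N. (cmod ((Psi * mat_adjoint Psi) $$ (r, s) - (if r = s then 1 else 0)))\<^sup>2)"
    by (intro sum_nonneg) simp
  then show ?thesis
    using frame_potential_minus_dim[OF assms] by linarith
qed

lemma parseval_iff_frame_potential:
  assumes "Psi \<in> carrier_mat N M" and "(\<Sum>i<M. (col_norm Psi i)\<^sup>2) = real N"
  shows "parseval Psi \<longleftrightarrow> frame_potential Psi = real N"
proof -
  let ?S = "Psi * mat_adjoint Psi"
  have "?S \<in> carrier_mat N N"
    using assms(1) by (auto intro!: carrier_matI)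
  then have "parseval Psi \<longleftrightarrow> (\<forall>r<N. \<forall>s<N. ?S $$ (r, s) = (if r = s then 1 else 0))"
    unfolding parseval_def using assms(1) by (auto simp del: index_mult_mat intro!: eq_matI)
  also have "\<dots> \<longleftrightarrow> (\<Sum>r<N. \<Sum>s<N. (cmod (?S $$ (r, s) - (if r = s then 1 else 0)))\<^sup>2) = 0"
    by (auto simp add: sum_nonneg sum_nonneg_eq_0_iff simp del: index_mult_mat)
  finally show ?thesis
    using frame_potential_minus_dim[OF assms] by (metis eq_iff_diff_eq_0)
qed

definition sq_overlap :: "complex mat \<Rightarrow> nat \<Rightarrow> nat \<Rightarrow> real" where
  "sq_overlap Psi i j = (cmod (col_inner Psi i j))\<^sup>2"

definition welch_bound :: "nat \<Rightarrow> nat \<Rightarrow> real" where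
  "welch_bound M N = real N * (real M - real N) / ((real M)\<^sup>2 * (real M - 1))"

lemma sq_overlap_commute: "sq_overlap Psi j i = sq_overlap Psi i j"
  unfolding sq_overlap_def by (simp add: col_inner_commute[of Psi j i])

lemma welch_bound_less:
  assumes "2 \<le> M" and "2 \<le> N"
  shows "welch_bound M N < (real N / real M)\<^sup>2"
proof -
  have "real M - real N < real N * (real M - 1)"
    using assms by (simp add: algebra_simps)
  then have "real N * (real M - real N) < real N * (real N * (real M - 1))"
    using assms by (intro mult_strict_left_mono) auto
  then show ?thesis
    using assms unfolding welch_bound_def by (simp add: field_simps power2_eq_square)
qed

lemma card_index_pairs_welch_bound:
  assumes "2 \<le> M"
  shows "2 * (real (card (index_pairs M)) * welch_bound M N) = real N - (real N)\<^sup>2 / real M"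
  using assms unfolding mult.assoc[symmetric] card_index_pairs welch_bound_def
  by (simp add: field_simps power2_eq_square)

lemma E_set_carrier: "Psi \<in> E_set F M N \<Longrightarrow> Psi \<in> carrier_mat N M"
  unfolding E_set_def frames_in_def by simp

lemma E_set_col_norm_sq: "Psi \<in> E_set F M N \<Longrightarrow> j < M \<Longrightarrow> (col_norm Psi j)\<^sup>2 = real N / real M"
  unfolding E_set_def by simp

lemma E_set_sum_col_norm_sq:
  "Psi \<in> E_set F M N \<Longrightarrow> 0 < M \<Longrightarrow> (\<Sum>i<M. (col_norm Psi i)\<^sup>2) = real N"
  by (simp add: E_set_col_norm_sq)

lemma E_set_norm_col_inner_le:
  assumes "Psi \<in> E_set F M N" and "i < M" and "j < M"
  shows "cmod (col_inner Psi i j) \<le> real N / real M"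
proof -
  have "col_norm Psi i * col_norm Psi j = real N / real M"
    using assms unfolding E_set_def by simp
  then show ?thesis
    using norm_col_inner_le[of Psi i j] by simp
qed

lemma NE2_E_set:
  assumes "Psi \<in> E_set F M N"
  shows "NE 2 Psi = (\<Sum>(i, j)\<in>index_pairs M. pair_nuclear_norm (real N / real M) (sq_overlap Psi i j))"
  unfolding NE2_eq_sum_index_pairs carrier_matD(2)[OF E_set_carrier[OF assms]]
proof (rule sum.cong[OF refl])
  fix p assume "p \<in> index_pairs M"
  then obtain i j where p: "p = (i, j)" "i < j" "j < M"
    by (auto simp: index_pairs_def)
  then show "(case p of (i, j) \<Rightarrow> nuclear_norm (col_submat Psi {i, j})) =
      (case p of (i, j) \<Rightarrow> pair_nuclear_norm (real N / real M) (sq_overlap Psi i j))"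
    using assms nuclear_norm_col_pair[of i j Psi] E_set_col_norm_sq[OF assms]
      E_set_norm_col_inner_le[OF assms, of i j]
    by (simp add: sq_overlap_def sum_sqrt_eq_pair_nuclear_norm)
qed

lemma frame_potential_E_set:
  assumes "Psi \<in> E_set F M N"
  shows "frame_potential Psi = (real N)\<^sup>2 / real M + 2 * (\<Sum>(i, j)\<in>index_pairs M. sq_overlap Psi i j)"
proof -
  have "sq_overlap Psi i i = (real N / real M)\<^sup>2" if "i < M" for i
    unfolding sq_overlap_def col_inner_self E_set_col_norm_sq[OF assms that] norm_of_real power2_abs ..
  then have "(\<Sum>i<M. sq_overlap Psi i i) = real M * (real N / real M)\<^sup>2"
    by simp
  also have "\<dots> = (real N)\<^sup>2 / real M"
    by (cases "M = 0") (simp_all add: field_simps power2_eq_square)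
  finally show ?thesis
    using sum_square_index_pairs[of "sq_overlap Psi" M] E_set_carrier[OF assms]
    unfolding frame_potential_def sq_overlap_def[symmetric] by (simp add: sq_overlap_commute)
qed

lemma sum_sq_overlap_ge_welch_bound:
  assumes "Psi \<in> E_set F M N" and "2 \<le> M"
  shows "real (card (index_pairs M)) * welch_bound M N \<le> (\<Sum>(i, j)\<in>index_pairs M. sq_overlap Psi i j)"
    and "parseval Psi \<longleftrightarrow>
      (\<Sum>(i, j)\<in>index_pairs M. sq_overlap Psi i j) = real (card (index_pairs M)) * welch_bound M N"
proof -
  have trace: "(\<Sum>i<M. (col_norm Psi i)\<^sup>2) = real N"
    using assms by (simp add: E_set_sum_col_norm_sq)
  have "frame_potential Psi - real N =
      2 * ((\<Sum>(i, j)\<in>index_pairs M. sq_overlap Psi i j) - real (card (index_pairs M)) * welch_bound M N)"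
    using frame_potential_E_set[OF assms(1)] card_index_pairs_welch_bound[OF assms(2), of N]
    by (simp add: algebra_simps)
  then show "real (card (index_pairs M)) * welch_bound M N \<le> (\<Sum>(i, j)\<in>index_pairs M. sq_overlap Psi i j)"
    and "parseval Psi \<longleftrightarrow>
      (\<Sum>(i, j)\<in>index_pairs M. sq_overlap Psi i j) = real (card (index_pairs M)) * welch_bound M N"
    using frame_potential_ge_dim[OF E_set_carrier[OF assms(1)] trace]
      parseval_iff_frame_potential[OF E_set_carrier[OF assms(1)] trace] by auto
qed

lemma E_set_equiangular_parseval_iff:
  assumes "Psi \<in> E_set F M N" and "2 \<le> M"
  shows "equiangular Psi \<and> parseval Psi \<longleftrightarrow> (\<forall>(i, j)\<in>index_pairs M. sq_overlap Psi i j = welch_bound M N)"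
proof
  assume equi_pars: "equiangular Psi \<and> parseval Psi"
  have "dim_col Psi = M"
    using E_set_carrier[OF assms(1)] by simp
  then have angles: "\<forall>i<M. \<forall>j<M. \<forall>k<M. \<forall>l<M. i \<noteq> j \<longrightarrow> k \<noteq> l \<longrightarrow>
      cmod (col_inner Psi i j) = cmod (col_inner Psi k l)"
    using equi_pars unfolding equiangular_def by (elim conjE) (simp only:)
  have constant_overlap: "sq_overlap Psi i j = sq_overlap Psi 0 1" if "(i, j) \<in> index_pairs M" for i j
  proof -
    have "i < j" "j < M"
      using that unfolding index_pairs_def by auto
    then have "cmod (col_inner Psi i j) = cmod (col_inner Psi 0 1)"
      using assms(2) by (intro angles[rule_format]) auto
    then show ?thesis
      unfolding sq_overlap_def by simp
  qed
  then have "(\<Sum>(i, j)\<in>index_pairs M. sq_overlap Psi i j) = real (card (index_pairs M)) * sq_overlap Psi 0 1"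
    by (simp add: case_prod_beta)
  moreover have "0 < real (card (index_pairs M))"
  proof -
    have "0 < real M * (real M - 1)"
      using assms(2) by simp
    then show ?thesis
      using card_index_pairs[of M] by linarith
  qed
  ultimately have "sq_overlap Psi 0 1 = welch_bound M N"
    using equi_pars sum_sq_overlap_ge_welch_bound(2)[OF assms] by simp
  with constant_overlap show "\<forall>(i, j)\<in>index_pairs M. sq_overlap Psi i j = welch_bound M N"
    by auto
next
  assume welch: "\<forall>(i, j)\<in>index_pairs M. sq_overlap Psi i j = welch_bound M N"
  then have "parseval Psi"
    using sum_sq_overlap_ge_welch_bound(2)[OF assms] by (simp add: case_prod_beta)
  have overlap: "sq_overlap Psi i j = welch_bound M N" if "i < M" "j < M" "i \<noteq> j" for i j
  proof (cases "i < j")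
    case True
    then have "(i, j) \<in> index_pairs M"
      using that by (simp add: index_pairs_def)
    then show ?thesis
      using welch by fastforce
  next
    case False
    then have "(j, i) \<in> index_pairs M"
      using that by (simp add: index_pairs_def)
    then show ?thesis
      using welch sq_overlap_commute[of Psi i j] by fastforce
  qed
  have "dim_col Psi = M"
    using E_set_carrier[OF assms(1)] by simp
  have "equiangular Psi"
    unfolding equiangular_def \<open>dim_col Psi = M\<close>
  proof (intro conjI allI impI)
    fix i j assume "i < M" "j < M"
    then show "col_norm Psi i = col_norm Psi j"
      using assms(1) unfolding E_set_def by simp
  next
    fix i j k l assume "i < M" "j < M" "k < M" "l < M" "i \<noteq> j" "k \<noteq> l"
    then have "(cmod (col_inner Psi i j))\<^sup>2 = (cmod (col_inner Psi k l))\<^sup>2"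
      using overlap unfolding sq_overlap_def by simp
    then show "cmod (col_inner Psi i j) = cmod (col_inner Psi k l)"
      by (simp add: power2_eq_iff_nonneg)
  qed
  with \<open>parseval Psi\<close> show "equiangular Psi \<and> parseval Psi"
    by simp
qed

lemma NE2_le_welch_bound:
  assumes "Psi \<in> E_set F M N" and "2 \<le> M" and "2 \<le> N"
  defines "bound \<equiv> real (card (index_pairs M)) * pair_nuclear_norm (real N / real M) (welch_bound M N)"
  shows "NE 2 Psi \<le> bound"
    and "NE 2 Psi = bound \<longleftrightarrow> equiangular Psi \<and> parseval Psi"
proof -
  have "sq_overlap Psi i j \<le> (real N / real M)\<^sup>2" if "(i, j) \<in> index_pairs M" for i j
    using that E_set_norm_col_inner_le[OF assms(1), of i j] unfolding sq_overlap_def index_pairs_def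
    by (simp add: power_mono)
  then have overlap_le: "\<And>p. p \<in> index_pairs M \<Longrightarrow> case_prod (sq_overlap Psi) p \<le> (real N / real M)\<^sup>2"
    by auto
  have "0 < real N / real M"
    using assms(2,3) by simp
  note tangent_bound = sum_pair_nuclear_norm_le[OF finite_index_pairs this
      welch_bound_less[OF assms(2,3)] overlap_le sum_sq_overlap_ge_welch_bound(1)[OF assms(1,2)]]
  show "NE 2 Psi \<le> bound"
    using tangent_bound(1) unfolding NE2_E_set[OF assms(1)] bound_def by (simp add: case_prod_beta')
  show "NE 2 Psi = bound \<longleftrightarrow> equiangular Psi \<and> parseval Psi"
    using tangent_bound(2) unfolding NE2_E_set[OF assms(1)] bound_def E_set_equiangular_parseval_iff[OF assms(1,2)]
    by (simp add: case_prod_beta')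
qed

lemma sum_col_norm_sq_parseval:
  assumes "Psi \<in> carrier_mat N M" and "parseval Psi"
  shows "(\<Sum>i<M. (col_norm Psi i)\<^sup>2) = real N"
proof -
  have "Psi * mat_adjoint Psi = 1\<^sub>m N"
    using assms unfolding parseval_def by simp
  then have "(\<Sum>r<N. Re ((Psi * mat_adjoint Psi) $$ (r, r))) = (\<Sum>r<N. 1)"
    by (intro sum.cong refl) simp
  then show ?thesis
    using trace_frame_operator[OF assms(1)] by simp
qed

lemma equiangular_parseval_in_E_set:
  assumes "Psi \<in> frames_in F M N" and "equiangular Psi" and "parseval Psi"
  shows "Psi \<in> E_set F M N"
proof -
  have carrier: "Psi \<in> carrier_mat N M"
    using assms(1) unfolding frames_in_def by simp
  have "dim_col Psi = M"
    using carrier by simp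
  then have equal_norms: "\<forall>i<M. \<forall>j<M. col_norm Psi i = col_norm Psi j"
    using assms(2) unfolding equiangular_def by (elim conjE) (simp only:)
  have "col_norm Psi j = sqrt (real N / real M)" if "j < M" for j
  proof -
    have "(\<Sum>i<M. (col_norm Psi i)\<^sup>2) = (\<Sum>i<M. (col_norm Psi j)\<^sup>2)"
      by (intro sum.cong refl) (metis equal_norms lessThan_iff that)
    then have "real M * (col_norm Psi j)\<^sup>2 = real N"
      using sum_col_norm_sq_parseval[OF carrier assms(3)] by simp
    then have "(col_norm Psi j)\<^sup>2 = real N / real M"
      using that by (simp add: field_simps)
    moreover have "0 \<le> col_norm Psi j"
      unfolding col_norm_def by (simp add: sum_nonneg)
    ultimately show ?thesis
      by (metis real_sqrt_unique)
  qed
  then show ?thesis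
    using assms(1) unfolding E_set_def by simp
qed

lemma parseval_E_set_dim_le:
  assumes "Psi \<in> E_set F M N" and "parseval Psi"
  shows "N \<le> M"
proof (cases "M = 0")
  case True
  then show ?thesis
    using sum_col_norm_sq_parseval[OF E_set_carrier[OF assms(1)] assms(2)] by simp
next
  case False
  have trace: "(\<Sum>i<M. (col_norm Psi i)\<^sup>2) = real N"
    using False assms(1) by (simp add: E_set_sum_col_norm_sq)
  have "0 \<le> (\<Sum>(i, j)\<in>index_pairs M. sq_overlap Psi i j)"
    unfolding sq_overlap_def by (intro sum_nonneg) auto
  then have "(real N)\<^sup>2 / real M \<le> real N"
    using frame_potential_E_set[OF assms(1)] assms(2)
      parseval_iff_frame_potential[OF E_set_carrier[OF assms(1)] trace] by simp
  then show ?thesis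
    using False by (cases "N = 0") (simp_all add: field_simps power2_eq_square)
qed

theorem proposition20:
  fixes F :: "complex set" and M N :: nat and Phi :: "complex mat"
  assumes "F = \<real> \<or> F = UNIV"
    and "N \<ge> 2"
    and "\<exists>Psi \<in> frames_in F M N. equiangular Psi \<and> parseval Psi"
    and "Phi \<in> E_set F M N"
  shows "(\<forall>Psi \<in> E_set F M N. NE 2 Psi \<le> NE 2 Phi) \<longleftrightarrow> equiangular Phi \<and> parseval Phi"
proof -
  obtain Psi0 where "Psi0 \<in> frames_in F M N" and etf: "equiangular Psi0" "parseval Psi0"
    using assms(3) by blast
  then have Psi0: "Psi0 \<in> E_set F M N"
    by (rule equiangular_parseval_in_E_set)
  then have "N \<le> M"
    using etf(2) by (rule parseval_E_set_dim_le)
  then have "2 \<le> M"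
    using assms(2) by simp
  define bound where
    "bound = real (card (index_pairs M)) * pair_nuclear_norm (real N / real M) (welch_bound M N)"
  note NE2_bound = NE2_le_welch_bound[OF _ \<open>2 \<le> M\<close> assms(2), folded bound_def]
  have "NE 2 Psi0 = bound"
    using NE2_bound(2)[OF Psi0] etf by simp
  show ?thesis
  proof
    assume "\<forall>Psi \<in> E_set F M N. NE 2 Psi \<le> NE 2 Phi"
    then have "NE 2 Phi = bound"
      using Psi0 \<open>NE 2 Psi0 = bound\<close> NE2_bound(1)[OF assms(4)] by fastforce
    then show "equiangular Phi \<and> parseval Phi"
      using NE2_bound(2)[OF assms(4)] by simp
  next
    assume "equiangular Phi \<and> parseval Phi"
    then have "NE 2 Phi = bound"
      using NE2_bound(2)[OF assms(4)] by simp
    then show "\<forall>Psi \<in> E_set F M N. NE 2 Psi \<le> NE 2 Phi"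
      using NE2_bound(1) by simp
  qed
qed

end
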